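(* Consider the stochastic minimax problem $\min_{x\in\mathbb{R}^n}\max_{y\in\mathbb{R}^m}\phi(x,y)$, $\phi(x,y)=\vartheta(x)+f(x,y)-\omega(y)$, with the setting, oracle, algorithm (SAPS) and averaged iterate described in the context, and assume (A1)–(A4) hold. Let $N>0$ be an integer, let $z^1,\dots,z^N$ be generated by SAPS with a constant step size $\gamma_k\equiv\gamma$ for $k=1,\dots,N$, and let $\widetilde z^N$ be the averaged iterate. Then: (a) if $\gamma_k=1/\sqrt N$, then $\mathbb{E}[\epsilon_\phi(\widetilde z^N)]\le (\|z^1-z^*\|^2+M_*^2)/(2\sqrt N)$; (b) if $\gamma_k=\|z^1-z^*\|/(M_*\sqrt N)$, then $\mathbb{E}[\epsilon_\phi(\widetilde z^N)]\le \|z^1-z^*\|M_*/\sqrt N$; (c) if $\gamma_k=\theta\|z^1-z^*\|/(M_*\sqrt N)$ for some $\theta>0$, then $\mathbb{E}[\epsilon_\phi(\widetilde z^N)]\le \max\{\theta,\theta^{-1}\}\|z^1-z^*\|M_*/\sqrt N$.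
   Context: Setting: $\vartheta:\mathbb{R}^n\to\mathbb{R}\cup\{+\infty\}$ and $\omega:\mathbb{R}^m\to\mathbb{R}\cup\{+\infty\}$ are proper lower semicontinuous convex functions; $\xi$ is a random vector with distribution supported on $\Xi\subseteq\mathbb{R}^q$; $F:\mathbb{R}^n\times\mathbb{R}^m\times\Xi\to\mathbb{R}$, and $f(x,y)=\mathbb{E}[F(x,y,\xi)]$ is finite, continuous, convex in $x$ and concave in $y$ on $\mathbb{Z}:=\mathrm{dom}\,\vartheta\times\mathrm{dom}\,\omega$. Write $z=(x,y)$. For a proper lsc convex $h$ and $\gamma>0$, $\mathrm{Prox}_{\gamma h}(u)=\mathrm{argmin}_w\{h(w)+\frac{1}{2\gamma}\|w-u\|^2\}$. (A1) The samples $\xi_1,\xi_2,\dots$ are i.i.d. copies of $\xi$. (A2) A stochastic oracle returns, for $(x,y,\xi)\in\mathbb{Z}\times\Xi$, vectors $G_x(x,y,\xi)\in\mathbb{R}^n$, $G_y(x,y,\xi)\in\mathbb{R}^m$ such that $g_x(x,y):=\mathbb{E}[G_x(x,y,\xi)]\in\partial_x f(x,y)$ and $g_y(x,y):=\mathbb{E}[G_y(x,y,\xi)]$ satisfies $-g_y(x,y)\in\partial_y[-f](x,y)$. Write $G(z,\xi)=(G_x(z,\xi),-G_y(z,\xi))$ and $g(z)=(g_x(z),-g_y(z))$. (A3) There is $z^*=(x^*,y^* )\in\mathbb{Z}$ with $\phi(x^*,y)\le\phi(x^*,y^* )\le\phi(x,y^* )$ for all $(x,y)\in\mathbb{Z}$.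 The minimax optimality measure is $\epsilon_\phi(z)=\phi(x,y^* )-\phi(x^*,y)$. (A4) There is $M_*>0$ such that for every $z=(x,y)\in\mathbb{Z}$ there exist $v_x(x)\in\partial\vartheta(x)$, $v_y(y)\in\partial\omega(y)$ with $v(z)=(v_x(x),v_y(y))$ satisfying $\mathbb{E}[\|v(z)+G(z,\xi)\|^2]\le M_*^2$. SAPS algorithm: given $z^1=(x^1,y^1)\in\mathbb{R}^n\times\mathbb{R}^m$ and step sizes $\gamma_k>0$, for $k=1,2,\dots$: $x^{k+1}=\mathrm{Prox}_{\gamma_k\vartheta}(x^k-\gamma_kG_x(x^k,y^k,\xi_k))$, $y^{k+1}=\mathrm{Prox}_{\gamma_k\omega}(y^k+\gamma_kG_y(x^k,y^k,\xi_k))$. Averaged iterate: $\widetilde z^N=(\widetilde x^N,\widetilde y^N)=\sum_{j=1}^N\lambda_j^N z^j$ with $\lambda_j^N=\gamma_j/\sum_{i=1}^N\gamma_i$. *)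

theory Defs
  imports "HOL-Probability.Probability"
begin

definition edom :: "('a \<Rightarrow> ereal) \<Rightarrow> 'a set" where
  "edom h = {x. h x \<noteq> \<infinity>}"

definition proper_fun :: "('a \<Rightarrow> ereal) \<Rightarrow> bool" where
  "proper_fun h \<longleftrightarrow> (\<forall>x. h x \<noteq> -\<infinity>) \<and> (\<exists>x. h x \<noteq> \<infinity>)"

definition lsc_fun :: "('a::topological_space \<Rightarrow> ereal) \<Rightarrow> bool" where
  "lsc_fun h \<longleftrightarrow> (\<forall>c::real. closed {x. h x \<le> ereal c})"

definition convex_efun :: "('a::real_vector \<Rightarrow> ereal) \<Rightarrow> bool" where
  "convex_efun h \<longleftrightarrow> convex (edom h) \<and> convex_on (edom h) (\<lambda>x. real_of_ereal (h x))"

definition proper_lsc_convex :: "('a::real_normed_vector \<Rightarrow> ereal) \<Rightarrow> bool" where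
  "proper_lsc_convex h \<longleftrightarrow> proper_fun h \<and> lsc_fun h \<and> convex_efun h"

definition esubdiff :: "('a::real_inner \<Rightarrow> ereal) \<Rightarrow> 'a \<Rightarrow> 'a set" where
  "esubdiff h x = {v. h x \<noteq> \<infinity> \<and> (\<forall>w. h x + ereal (v \<bullet> (w - x)) \<le> h w)}"

definition Prox :: "real \<Rightarrow> ('a::real_normed_vector \<Rightarrow> ereal) \<Rightarrow> 'a \<Rightarrow> 'a" where
  "Prox \<gamma> h u = (THE w. \<forall>v. h w + ereal (norm (w - u)^2 / (2 * \<gamma>))
                              \<le> h v + ereal (norm (v - u)^2 / (2 * \<gamma>)))"

text \<open>The objective phi(x,y) = vartheta(x) + f(x,y) - omega(y) (meaningful on dom x dom).\<close>
definition phi :: "('a \<Rightarrow> ereal) \<Rightarrow> ('a \<Rightarrow> 'b \<Rightarrow> real) \<Rightarrow> ('b \<Rightarrow> ereal) \<Rightarrow> 'a \<Rightarrow> 'b \<Rightarrow> real" where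
  "phi vth f \<omega> x y = real_of_ereal (vth x) + f x y - real_of_ereal (\<omega> y)"

definition eps_phi :: "('a \<Rightarrow> ereal) \<Rightarrow> ('a \<Rightarrow> 'b \<Rightarrow> real) \<Rightarrow> ('b \<Rightarrow> ereal) \<Rightarrow> 'a \<times> 'b \<Rightarrow> 'a \<times> 'b \<Rightarrow> real" where
  "eps_phi vth f \<omega> zs z = phi vth f \<omega> (fst z) (snd zs) - phi vth f \<omega> (fst zs) (snd z)"

definition avg_iter :: "(nat \<Rightarrow> real) \<Rightarrow> nat \<Rightarrow> (nat \<Rightarrow> 'a::real_vector) \<Rightarrow> 'a" where
  "avg_iter \<gamma>s N z = (\<Sum>j=1..N. (\<gamma>s j / (\<Sum>i=1..N. \<gamma>s i)) *\<^sub>R z j)"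

end

theory Submission
  imports Defs
begin

(* Each SAPS step is a proximal step z' = Prox (z - gamma G(z, xi)). Comparing the variational
   inequality of Prox, tested at the saddle point z*, with the subgradient inequality at z gives
   pointwise
     |z' - z*|^2 <= |z - z*|^2 - 2 gamma <G(z, xi) + v, z - z*> + gamma^2 |v + G(z, xi)|^2
   (v a subgradient of the regulariser), and averaging over the fresh sample, which is independent
   of z, turns the inner product into an upper bound for the gap eps(z) by unbiasedness and
   convexity-concavity:
     E |z_{k+1} - z*|^2 + 2 gamma E eps(z_k) <= E |z_k - z*|^2 + gamma^2 Ms^2.
   Telescoping gives sum_{k<N} E eps(z_k) <= (|z_1 - z*|^2 + N gamma^2 Ms^2) / (2 gamma), and since
   eps is convex, Jensen's inequality moves this to the averaged iterate; the three step sizes give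
   the three rates. Prox is well defined because a subgradient gives an affine minorant, which makes
   h + |. - u|^2/(2 gamma) coercive. *)

lemma le_of_forall_le_add_mult:
  fixes a b c :: real
  assumes "\<And>t. 0 < t \<Longrightarrow> t \<le> 1 \<Longrightarrow> a \<le> b + t * c"
  shows "a \<le> b"
proof (rule field_le_epsilon)
  fix e :: real
  assume "0 < e"
  define t where "t = min 1 (e / (\<bar>c\<bar> + 1))"
  have t: "0 < t" "t \<le> 1"
    using \<open>0 < e\<close> by (auto simp: t_def)
  have "t * c \<le> t * \<bar>c\<bar>"
    using t by (simp add: mult_left_mono)
  also have "\<dots> \<le> e / (\<bar>c\<bar> + 1) * \<bar>c\<bar>"
    by (rule mult_right_mono) (simp_all add: t_def)
  also have "\<dots> \<le> e"
    using \<open>0 < e\<close> by (simp add: field_simps)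
  finally show "a \<le> b + e"
    using assms[OF t] by linarith
qed

lemma inner_add_norm_sq_ge:
  fixes v w :: "'a::real_inner"
  assumes "\<gamma> > 0"
  shows "(norm w)^2 / (4 * \<gamma>) - \<gamma> * (norm v)^2 \<le> inner v w + (norm w)^2 / (2 * \<gamma>)"
proof -
  have "- (norm v * norm w) \<le> inner v w"
    using Cauchy_Schwarz_ineq2[of v w] by linarith
  moreover have "0 \<le> (norm w - 2 * \<gamma> * norm v)^2"
    by simp
  then have "norm v * norm w \<le> (norm w)^2 / (4 * \<gamma>) + \<gamma> * (norm v)^2"
    using assms by (simp add: field_simps power2_eq_square)
  moreover have "(norm w)^2 / (2 * \<gamma>) = (norm w)^2 / (4 * \<gamma>) + (norm w)^2 / (4 * \<gamma>)"
    by (simp add: field_simps)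
  ultimately show ?thesis
    by linarith
qed

lemma norm_diff_sq_le_of_variational_ineqs:
  fixes p q u v :: "'a::real_inner"
  assumes "\<gamma> * hp + inner (u - p) (q - p) \<le> \<gamma> * hq"
    and "\<gamma> * hq + inner (v - q) (p - q) \<le> \<gamma> * hp"
  shows "(norm (p - q))^2 \<le> inner (u - v) (p - q)"
proof -
  have "inner (u - p) (q - p) + inner (v - q) (p - q) = (norm (p - q))^2 - inner (u - v) (p - q)"
    by (simp add: power2_norm_eq_inner inner_diff_left inner_diff_right inner_commute)
  then show ?thesis
    using assms by linarith
qed

lemma prox_grad_step_sq_dist_le:
  fixes z zs p G v :: "'a::real_inner"
  assumes "\<gamma> > 0"
    and vi: "\<gamma> * hp + inner (z - \<gamma> *\<^sub>R G - p) (zs - p) \<le> \<gamma> * hzs"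
    and sub: "hz + inner v (p - z) \<le> hp"
  shows "(norm (p - zs))^2 \<le> (norm (z - zs))^2 - 2 * \<gamma> * (hz - hzs + inner G (z - zs)) + \<gamma>^2 * (norm (v + G))^2"
proof -
  define d a where "d = z - p" and "a = p - zs"
  have diffs: "z - zs = d + a" "z - \<gamma> *\<^sub>R G - p = d - \<gamma> *\<^sub>R G" "zs - p = - a" "p - z = - d"
    by (simp_all add: d_def a_def)
  have expand:
    "(norm (z - zs))^2 = (norm d)^2 + 2 * inner d a + (norm a)^2"
    "inner (z - \<gamma> *\<^sub>R G - p) (zs - p) = \<gamma> * inner G a - inner d a"
    "\<gamma> * inner v (p - z) = - (\<gamma> * inner v d)"
    "2 * \<gamma> * (hz - hzs + inner G (z - zs)) = 2 * (\<gamma> * hz) - 2 * (\<gamma> * hzs) + 2 * (\<gamma> * inner G d) + 2 * (\<gamma> * inner G a)"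
    unfolding diffs
    by (simp_all add: power2_norm_eq_inner inner_add_left inner_add_right inner_diff_left inner_commute algebra_simps)
  have "(norm (d - \<gamma> *\<^sub>R (v + G)))^2 = (norm d)^2 - 2 * (\<gamma> * inner v d) - 2 * (\<gamma> * inner G d) + \<gamma>^2 * (norm (v + G))^2"
    unfolding power2_norm_eq_inner
    by (simp add: inner_add_left inner_add_right inner_diff_left inner_diff_right inner_commute power2_eq_square algebra_simps)
  moreover have "0 \<le> (norm (d - \<gamma> *\<^sub>R (v + G)))^2"
    by simp
  moreover have "\<gamma> * hz + \<gamma> * inner v (p - z) \<le> \<gamma> * hp"
    using mult_left_mono[OF sub] assms(1) by (simp add: distrib_left)
  ultimately show ?thesis
    using vi unfolding expand a_def[symmetric] by linarith
qed

lemma convex_on_Times_add: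
  assumes g: "convex_on A g" and h: "convex_on B h"
  shows "convex_on (A \<times> B) (\<lambda>z. g (fst z) + h (snd z))"
proof (rule convex_onI)
  fix t :: real and x y
  assume "0 < t" "t < 1" "x \<in> A \<times> B" "y \<in> A \<times> B"
  then show "g (fst ((1 - t) *\<^sub>R x + t *\<^sub>R y)) + h (snd ((1 - t) *\<^sub>R x + t *\<^sub>R y))
      \<le> (1 - t) * (g (fst x) + h (snd x)) + t * (g (fst y) + h (snd y))"
    using convex_onD[OF g, of t "fst x" "fst y"] convex_onD[OF h, of t "snd x" "snd y"]
    by (auto simp: mem_Times_iff algebra_simps)
next
  show "convex (A \<times> B)"
    using g h by (intro convex_Times convex_on_imp_convex)
qed

section \<open>Extended-real convex functions\<close>

lemma proper_lsc_convex_not_minf [simp]: "proper_lsc_convex h \<Longrightarrow> h x \<noteq> -\<infinity>"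
  by (simp add: proper_lsc_convex_def proper_fun_def)

lemma esubdiff_real_ineq:
  assumes "proper_lsc_convex h" "v \<in> esubdiff h x" "w \<in> edom h"
  shows "real_of_ereal (h x) + inner v (w - x) \<le> real_of_ereal (h w)"
proof -
  have "h x + ereal (inner v (w - x)) \<le> h w" "h x \<noteq> \<infinity>"
    using assms(2) by (simp_all add: esubdiff_def)
  then show ?thesis
    using assms(1,3) by (cases "h x"; cases "h w") (auto simp: edom_def)
qed

lemma lsc_fun_add_continuous:
  fixes h :: "'a::topological_space \<Rightarrow> ereal"
  assumes lsc: "lsc_fun h" and g: "continuous_on UNIV g"
  shows "lsc_fun (\<lambda>w. h w + ereal (g w))"
  unfolding lsc_fun_def
proof
  fix c :: real
  have complement: "- {w. h w + ereal (g w) \<le> ereal c} = (\<Union>d. {w. c - g w < d} \<inter> - {w. h w \<le> ereal d})"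
  proof (intro set_eqI iffI)
    fix w
    assume "w \<in> - {w. h w + ereal (g w) \<le> ereal c}"
    then have "ereal (c - g w) < h w"
      by (cases "h w") auto
    then obtain d where "ereal (c - g w) < ereal d" "ereal d < h w"
      using ereal_dense2 by blast
    then show "w \<in> (\<Union>d. {w. c - g w < d} \<inter> - {w. h w \<le> ereal d})"
      by auto
  next
    fix w
    assume "w \<in> (\<Union>d. {w. c - g w < d} \<inter> - {w. h w \<le> ereal d})"
    then show "w \<in> - {w. h w + ereal (g w) \<le> ereal c}"
      by (cases "h w") auto
  qed
  have "open ({w. c - g w < d} \<inter> - {w. h w \<le> ereal d})" for d
  proof (rule open_Int)
    show "open {w. c - g w < d}"
      by (rule open_Collect_less) (auto intro!: continuous_intros g)
    show "open (- {w. h w \<le> ereal d})"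
      using lsc by (simp add: lsc_fun_def open_Compl)
  qed
  then show "closed {w. h w + ereal (g w) \<le> ereal c}"
    unfolding closed_def complement by (intro open_UN) blast
qed

lemma borel_measurable_lsc_fun:
  fixes h :: "'a::topological_space \<Rightarrow> ereal"
  assumes "lsc_fun h"
  shows "h \<in> borel_measurable borel"
proof (rule borel_measurableI_le)
  fix y :: ereal
  have "{x. h x \<le> y} = (\<Inter>c\<in>{c. y \<le> ereal c}. {x. h x \<le> ereal c})"
  proof (intro set_eqI iffI)
    fix x
    assume "x \<in> (\<Inter>c\<in>{c. y \<le> ereal c}. {x. h x \<le> ereal c})"
    then show "x \<in> {x. h x \<le> y}"
      using ereal_le_real[of y "h x"] by blast
  qed auto
  moreover have "closed \<dots>"
    using assms by (auto simp: lsc_fun_def)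
  ultimately show "{x \<in> space borel. h x \<le> y} \<in> sets borel"
    by (simp add: borel_closed)
qed

lemma ereal_le_of_le_add_inverse_Suc:
  assumes "\<And>n. x \<le> ereal (a + 1 / Suc n)"
  shows "x \<le> ereal a"
proof (rule ereal_le_epsilon2)
  fix e :: real
  assume "0 < e"
  then obtain n where "inverse (real (Suc n)) < e"
    using reals_Archimedean by blast
  then have "ereal (a + 1 / Suc n) \<le> ereal (a + e)"
    by (simp add: inverse_eq_divide)
  with assms[of n] have "x \<le> ereal (a + e)"
    by (rule order.trans)
  then show "x \<le> ereal a + ereal e"
    by simp
qed

lemma bounded_sublevel_of_quadratic_minorant:
  fixes \<Phi> :: "'a::real_normed_vector \<Rightarrow> ereal"
  assumes a: "a > 0" and minorant: "\<And>x. ereal (L + a * (norm (x - u))^2) \<le> \<Phi> x"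
  shows "bounded {x. \<Phi> x \<le> ereal c}"
proof (rule bounded_subset[OF bounded_cball])
  show "{x. \<Phi> x \<le> ereal c} \<subseteq> cball u (sqrt ((c - L) / a))"
  proof
    fix x
    assume "x \<in> {x. \<Phi> x \<le> ereal c}"
    then have "\<Phi> x \<le> ereal c"
      by simp
    with minorant[of x] have "ereal (L + a * (norm (x - u))^2) \<le> ereal c"
      by (rule order.trans)
    then have "(norm (x - u))^2 \<le> (c - L) / a"
      using a by (simp add: field_simps)
    then show "x \<in> cball u (sqrt ((c - L) / a))"
      by (simp add: dist_norm norm_minus_commute real_le_rsqrt)
  qed
qed

lemma lsc_fun_attains_min:
  fixes \<Phi> :: "'a::heine_borel \<Rightarrow> ereal"
  assumes lsc: "lsc_fun \<Phi>" and below: "\<And>x. ereal L \<le> \<Phi> x" and finite: "\<Phi> x0 \<noteq> \<infinity>"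
    and coercive: "\<And>c. bounded {x. \<Phi> x \<le> ereal c}"
  shows "\<exists>p. \<forall>v. \<Phi> p \<le> \<Phi> v"
proof -
  define m where "m = Inf (range \<Phi>)"
  have m_le: "m \<le> \<Phi> v" for v
    unfolding m_def by (rule Inf_lower) simp
  have "ereal L \<le> m"
    unfolding m_def by (rule Inf_greatest) (auto intro: below)
  moreover have "m \<noteq> \<infinity>"
    using m_le[of x0] finite by auto
  ultimately obtain mr where mr: "m = ereal mr"
    by (cases m) auto
  define S where "S n = {x. \<Phi> x \<le> ereal (mr + 1 / Suc n)}" for n :: nat
  have "compact (S n)" for n
    using lsc coercive by (simp add: S_def lsc_fun_def compact_eq_bounded_closed)
  moreover have "S n \<noteq> {}" for n
  proof -
    have "m < ereal (mr + 1 / Suc n)"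
      by (simp add: mr)
    then obtain x where "\<Phi> x < ereal (mr + 1 / Suc n)"
      by (auto simp: m_def Inf_less_iff)
    then have "x \<in> S n"
      by (simp add: S_def less_imp_le)
    then show ?thesis
      by blast
  qed
  moreover have "S n \<subseteq> S k" if "k \<le> n" for k n
  proof -
    have le: "ereal (mr + 1 / Suc n) \<le> ereal (mr + 1 / Suc k)"
      using that by (simp add: frac_le)
    show ?thesis
      unfolding S_def using order.trans[OF _ le] by blast
  qed
  ultimately have "\<Inter>(range S) \<noteq> {}"
    by (rule compact_nest)
  then obtain p where p: "\<And>n. p \<in> S n"
    by blast
  have "\<Phi> p \<le> m"
    unfolding mr by (rule ereal_le_of_le_add_inverse_Suc) (use p in \<open>simp add: S_def\<close>)
  then show ?thesis
    using m_le order.trans by blast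
qed

section \<open>The proximal operator\<close>

lemma prox_minimiser_in_edom:
  assumes plc: "proper_lsc_convex h"
    and min: "\<And>v. h p + ereal ((norm (p - u))^2 / (2 * \<gamma>)) \<le> h v + ereal ((norm (v - u))^2 / (2 * \<gamma>))"
  shows "p \<in> edom h"
proof -
  obtain w0 where "h w0 \<noteq> \<infinity>"
    using plc by (auto simp: proper_lsc_convex_def proper_fun_def)
  then show ?thesis
    using min[of w0] plc by (cases "h p") (auto simp: edom_def)
qed

lemma prox_minimiser_segment_le:
  fixes h :: "'a::real_inner \<Rightarrow> ereal"
  assumes plc: "proper_lsc_convex h"
    and min: "\<And>v. h p + ereal ((norm (p - u))^2 / (2 * \<gamma>)) \<le> h v + ereal ((norm (v - u))^2 / (2 * \<gamma>))"
    and w: "w \<in> edom h" and t: "0 < t" "t \<le> 1"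
  shows "real_of_ereal (h p) - real_of_ereal (h w) \<le> inner (p - u) (w - p) / \<gamma> + t * ((norm (w - p))^2 / (2 * \<gamma>))"
proof -
  have p: "p \<in> edom h"
    using plc min by (rule prox_minimiser_in_edom)
  have convex: "convex (edom h)" "convex_on (edom h) (\<lambda>x. real_of_ereal (h x))"
    using plc by (auto simp: proper_lsc_convex_def convex_efun_def)
  define hp hw where "hp = real_of_ereal (h p)" and "hw = real_of_ereal (h w)"
  define pt where "pt = p + t *\<^sub>R (w - p)"
  have pt_eq: "pt = (1 - t) *\<^sub>R p + t *\<^sub>R w"
    by (simp add: pt_def algebra_simps)
  have "pt \<in> edom h"
    unfolding pt_eq using convexD[OF convex(1) p w] t by simp
  then have min_pt: "hp + (norm (p - u))^2 / (2 * \<gamma>) \<le> real_of_ereal (h pt) + (norm (pt - u))^2 / (2 * \<gamma>)"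
    using min[of pt] p plc unfolding hp_def edom_def by (cases "h p"; cases "h pt") auto
  have convex_pt: "real_of_ereal (h pt) \<le> hp - t * hp + t * hw"
    using convex_onD[OF convex(2), of t p w] t p w unfolding pt_eq hp_def hw_def by (simp add: algebra_simps)
  have pt_u: "pt - u = (p - u) + t *\<^sub>R (w - p)"
    by (simp add: pt_def)
  have "(norm (pt - u))^2 = (norm (p - u))^2 + 2 * t * inner (p - u) (w - p) + t^2 * (norm (w - p))^2"
    unfolding pt_u power2_norm_eq_inner
    by (simp add: inner_add_left inner_add_right inner_commute power2_eq_square)
  then have "(norm (pt - u))^2 / (2 * \<gamma>) = (norm (p - u))^2 / (2 * \<gamma>)
      + t * (inner (p - u) (w - p) / \<gamma>) + t * (t * ((norm (w - p))^2 / (2 * \<gamma>)))"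
    by (simp add: add_divide_distrib power2_eq_square)
  then have "t * (hp - hw) \<le> t * (inner (p - u) (w - p) / \<gamma> + t * ((norm (w - p))^2 / (2 * \<gamma>)))"
    unfolding distrib_left right_diff_distrib using min_pt convex_pt by linarith
  then show ?thesis
    using t by (simp add: hp_def hw_def)
qed

lemma prox_minimiser_variational_ineq:
  fixes h :: "'a::real_inner \<Rightarrow> ereal"
  assumes plc: "proper_lsc_convex h" and \<gamma>: "\<gamma> > 0"
    and min: "\<And>v. h p + ereal ((norm (p - u))^2 / (2 * \<gamma>)) \<le> h v + ereal ((norm (v - u))^2 / (2 * \<gamma>))"
    and w: "w \<in> edom h"
  shows "\<gamma> * real_of_ereal (h p) + inner (u - p) (w - p) \<le> \<gamma> * real_of_ereal (h w)"
proof -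
  have "real_of_ereal (h p) - real_of_ereal (h w) \<le> inner (p - u) (w - p) / \<gamma>"
    using prox_minimiser_segment_le[OF plc min w] by (rule le_of_forall_le_add_mult)
  then have "\<gamma> * real_of_ereal (h p) - \<gamma> * real_of_ereal (h w) \<le> inner (p - u) (w - p)"
    using \<gamma> by (simp add: pos_le_divide_eq mult.commute right_diff_distrib)
  moreover have "inner (u - p) (w - p) = - inner (p - u) (w - p)"
    by (metis inner_minus_left minus_diff_eq)
  ultimately show ?thesis
    by simp
qed

lemma prox_minimiser_exists:
  fixes h :: "'a::euclidean_space \<Rightarrow> ereal"
  assumes plc: "proper_lsc_convex h" and \<gamma>: "\<gamma> > 0" and sub: "v0 \<in> esubdiff h z0"
  shows "\<exists>p. \<forall>v. h p + ereal ((norm (p - u))^2 / (2 * \<gamma>)) \<le> h v + ereal ((norm (v - u))^2 / (2 * \<gamma>))"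
proof -
  define \<Phi> where "\<Phi> w = h w + ereal ((norm (w - u))^2 / (2 * \<gamma>))" for w
  obtain a0 where a0: "h z0 = ereal a0"
    using plc sub by (cases "h z0") (auto simp: esubdiff_def)
  define L where "L = a0 + inner v0 (u - z0) - \<gamma> * (norm v0)^2"
  have lower: "ereal (L + 1 / (4 * \<gamma>) * (norm (w - u))^2) \<le> \<Phi> w" for w
  proof -
    have "L + 1 / (4 * \<gamma>) * (norm (w - u))^2 \<le> a0 + inner v0 (w - z0) + (norm (w - u))^2 / (2 * \<gamma>)"
      using inner_add_norm_sq_ge[OF \<gamma>, of "w - u" v0] by (simp add: L_def inner_diff_right)
    moreover have "ereal (a0 + inner v0 (w - z0)) \<le> h w"
      using sub a0 by (simp add: esubdiff_def)
    ultimately show ?thesis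
      unfolding \<Phi>_def by (cases "h w") auto
  qed
  have lsc: "lsc_fun \<Phi>"
    unfolding \<Phi>_def using plc \<gamma>
    by (intro lsc_fun_add_continuous) (auto simp: proper_lsc_convex_def intro!: continuous_intros)
  have below: "ereal L \<le> \<Phi> w" for w
    using lower[of w] by (rule order.trans[rotated]) (use \<gamma> in simp)
  have finite: "\<Phi> z0 \<noteq> \<infinity>"
    by (simp add: \<Phi>_def a0)
  have bounded: "bounded {w. \<Phi> w \<le> ereal c}" for c
    by (rule bounded_sublevel_of_quadratic_minorant[of "1 / (4 * \<gamma>)", OF _ lower]) (use \<gamma> in simp)
  obtain p where "\<forall>v. \<Phi> p \<le> \<Phi> v"
    using lsc_fun_attains_min[OF lsc below finite bounded] by blast
  then show ?thesis
    unfolding \<Phi>_def by blast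
qed

lemma Prox_minimises:
  fixes h :: "'a::euclidean_space \<Rightarrow> ereal"
  assumes plc: "proper_lsc_convex h" and \<gamma>: "\<gamma> > 0" and sub: "v0 \<in> esubdiff h z0"
  shows "h (Prox \<gamma> h u) + ereal ((norm (Prox \<gamma> h u - u))^2 / (2 * \<gamma>))
           \<le> h v + ereal ((norm (v - u))^2 / (2 * \<gamma>))"
proof -
  let ?min = "\<lambda>p. \<forall>v. h p + ereal ((norm (p - u))^2 / (2 * \<gamma>)) \<le> h v + ereal ((norm (v - u))^2 / (2 * \<gamma>))"
  have unique: "q = p" if p: "?min p" and q: "?min q" for p q
  proof -
    have "\<gamma> * real_of_ereal (h p) + inner (u - p) (q - p) \<le> \<gamma> * real_of_ereal (h q)"
      using p prox_minimiser_in_edom[OF plc q[rule_format]]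
      by (intro prox_minimiser_variational_ineq[OF plc \<gamma>]) auto
    moreover have "\<gamma> * real_of_ereal (h q) + inner (u - q) (p - q) \<le> \<gamma> * real_of_ereal (h p)"
      using q prox_minimiser_in_edom[OF plc p[rule_format]]
      by (intro prox_minimiser_variational_ineq[OF plc \<gamma>]) auto
    ultimately have "(norm (p - q))^2 \<le> inner (u - u) (p - q)"
      by (rule norm_diff_sq_le_of_variational_ineqs)
    then show "q = p"
      by simp
  qed
  obtain p where p: "?min p"
    using prox_minimiser_exists[OF plc \<gamma> sub] by blast
  have "?min (THE p. ?min p)"
    by (rule theI[of ?min p, OF p unique[OF p]])
  then show ?thesis
    unfolding Prox_def by blast
qed

lemma
  fixes h :: "'a::euclidean_space \<Rightarrow> ereal"
  assumes "proper_lsc_convex h" and "\<gamma> > 0" and "v0 \<in> esubdiff h z0"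
  shows Prox_in_edom: "Prox \<gamma> h u \<in> edom h"
    and Prox_variational_ineq: "w \<in> edom h \<Longrightarrow>
          \<gamma> * real_of_ereal (h (Prox \<gamma> h u)) + inner (u - Prox \<gamma> h u) (w - Prox \<gamma> h u) \<le> \<gamma> * real_of_ereal (h w)"
  using prox_minimiser_in_edom[OF assms(1) Prox_minimises[OF assms]]
    prox_minimiser_variational_ineq[OF assms(1,2) Prox_minimises[OF assms]] by blast+

lemma dist_Prox_le:
  fixes h :: "'a::euclidean_space \<Rightarrow> ereal"
  assumes "proper_lsc_convex h" and "\<gamma> > 0" and "v0 \<in> esubdiff h z0"
  shows "dist (Prox \<gamma> h u) (Prox \<gamma> h v) \<le> dist u v"
proof -
  let ?p = "Prox \<gamma> h u" and ?q = "Prox \<gamma> h v"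
  have "\<gamma> * real_of_ereal (h ?p) + inner (u - ?p) (?q - ?p) \<le> \<gamma> * real_of_ereal (h ?q)"
    by (rule Prox_variational_ineq[OF assms Prox_in_edom[OF assms]])
  moreover have "\<gamma> * real_of_ereal (h ?q) + inner (v - ?q) (?p - ?q) \<le> \<gamma> * real_of_ereal (h ?p)"
    by (rule Prox_variational_ineq[OF assms Prox_in_edom[OF assms]])
  ultimately have "(norm (?p - ?q))^2 \<le> inner (u - v) (?p - ?q)"
    by (rule norm_diff_sq_le_of_variational_ineqs)
  also have "\<dots> \<le> norm (u - v) * norm (?p - ?q)"
    by (rule Cauchy_Schwarz_ineq2[THEN abs_le_D1])
  finally have "norm (?p - ?q) * norm (?p - ?q) \<le> norm (u - v) * norm (?p - ?q)"
    by (simp add: power2_eq_square)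
  then have "norm (?p - ?q) \<le> norm (u - v)"
    by (cases "norm (?p - ?q) = 0") (auto simp: mult_le_cancel_right)
  then show ?thesis
    by (simp add: dist_norm)
qed

lemma borel_measurable_Prox:
  fixes h :: "'a::euclidean_space \<Rightarrow> ereal"
  assumes "proper_lsc_convex h" and "\<gamma> > 0" and "v0 \<in> esubdiff h z0"
  shows "Prox \<gamma> h \<in> borel_measurable borel"
proof (rule borel_measurable_continuous_onI)
  have "1-lipschitz_on UNIV (Prox \<gamma> h)"
    by (rule lipschitz_onI) (use dist_Prox_le[OF assms] in auto)
  then show "continuous_on UNIV (Prox \<gamma> h)"
    by (rule lipschitz_on_continuous_on)
qed

section \<open>Chains driven by independent samples\<close>

lemma (in prob_space) indep_var_nn_integral:
  assumes ind: "indep_var S X T Y" and \<psi>: "\<psi> \<in> borel_measurable (S \<Otimes>\<^sub>M T)"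
  shows "(\<integral>\<^sup>+ w. \<psi> (X w, Y w) \<partial>M) = (\<integral>\<^sup>+ w. (\<integral>\<^sup>+ t. \<psi> (X w, t) \<partial>distr M T Y) \<partial>M)"
proof -
  have X: "X \<in> measurable M S" and Y: "Y \<in> measurable M T"
    and joint: "distr M S X \<Otimes>\<^sub>M distr M T Y = distr M (S \<Otimes>\<^sub>M T) (\<lambda>w. (X w, Y w))"
    using ind unfolding indep_var_distribution_eq by auto
  interpret DX: prob_space "distr M S X"
    using X by (rule prob_space_distr)
  interpret DY: prob_space "distr M T Y"
    using Y by (rule prob_space_distr)
  interpret pair_sigma_finite "distr M S X" "distr M T Y" ..
  have \<psi>': "\<psi> \<in> borel_measurable (distr M S X \<Otimes>\<^sub>M distr M T Y)"
    using \<psi> by (simp cong: measurable_cong_sets)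
  have "(\<integral>\<^sup>+ w. \<psi> (X w, Y w) \<partial>M) = integral\<^sup>N (distr M (S \<Otimes>\<^sub>M T) (\<lambda>w. (X w, Y w))) \<psi>"
    using \<psi> X Y by (simp add: nn_integral_distr)
  also have "\<dots> = (\<integral>\<^sup>+ x. (\<integral>\<^sup>+ t. \<psi> (x, t) \<partial>distr M T Y) \<partial>distr M S X)"
    unfolding joint[symmetric] using \<psi>' by (rule DY.nn_integral_fst[symmetric])
  also have "\<dots> = (\<integral>\<^sup>+ w. (\<integral>\<^sup>+ t. \<psi> (X w, t) \<partial>distr M T Y) \<partial>M)"
    using X DY.borel_measurable_nn_integral[of "\<lambda>x t. \<psi> (x, t)" "distr M S X"] \<psi>'
    by (simp add: nn_integral_distr)
  finally show ?thesis .
qed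

lemma nn_integral_add_le_of_integral_add_le:
  assumes R: "integrable M R" and f: "\<And>x. 0 \<le> f x" "\<And>x. f x \<le> R x"
    and a: "0 \<le> a" and le: "(\<integral>x. R x \<partial>M) + a \<le> b"
  shows "(\<integral>\<^sup>+ x. ennreal (f x) \<partial>M) + ennreal a \<le> ennreal b"
proof -
  have R_nonneg: "0 \<le> R x" for x
    using f by (rule order_trans)
  have "(\<integral>\<^sup>+ x. ennreal (f x) \<partial>M) \<le> (\<integral>\<^sup>+ x. ennreal (R x) \<partial>M)"
    using f(2) by (intro nn_integral_mono ennreal_leI)
  also have "\<dots> = ennreal (\<integral>x. R x \<partial>M)"
    using R R_nonneg by (intro nn_integral_eq_integral) auto
  finally have "(\<integral>\<^sup>+ x. ennreal (f x) \<partial>M) + ennreal a \<le> ennreal (\<integral>x. R x \<partial>M) + ennreal a"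
    by (rule add_right_mono)
  also have "\<dots> = ennreal ((\<integral>x. R x \<partial>M) + a)"
    using R_nonneg a by (intro ennreal_plus[symmetric] integral_nonneg) auto
  also have "\<dots> \<le> ennreal b"
    using le by (rule ennreal_leI)
  finally show ?thesis .
qed

lemma (in prob_space) nn_integral_distr_restrict_singleton:
  assumes \<xi>: "\<xi> j \<in> measurable M P" and g: "g \<in> borel_measurable P"
  shows "(\<integral>\<^sup>+ t. g (t j) \<partial>distr M (PiM {j} (\<lambda>_. P)) (\<lambda>w. restrict (\<lambda>i. \<xi> i w) {j}))
       = (\<integral>\<^sup>+ s. g s \<partial>distr M P (\<xi> j))"
proof -
  have "(\<lambda>w. restrict (\<lambda>i. \<xi> i w) {j}) \<in> measurable M (PiM {j} (\<lambda>_. P))"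
    using \<xi> by (intro measurable_restrict) auto
  moreover have "(\<lambda>t. t j) \<in> measurable (PiM {j} (\<lambda>_. P)) P"
    by (rule measurable_component_singleton) simp
  then have "(\<lambda>t. g (t j)) \<in> borel_measurable (PiM {j} (\<lambda>_. P))"
    using g by (rule measurable_compose)
  ultimately show ?thesis
    using \<xi> g by (simp add: nn_integral_distr)
qed

primrec sample_iter :: "('z \<Rightarrow> 's \<Rightarrow> 'z) \<Rightarrow> 'z \<Rightarrow> nat \<Rightarrow> (nat \<Rightarrow> 's) \<Rightarrow> 'z" where
  "sample_iter T z0 0 \<xi> = z0"
| "sample_iter T z0 (Suc k) \<xi> = T (sample_iter T z0 k \<xi>) (\<xi> (Suc k))"

lemma sample_iter_cong:
  "(\<And>i. i \<le> k \<Longrightarrow> \<xi> i = \<xi>' i) \<Longrightarrow> sample_iter T z0 k \<xi> = sample_iter T z0 k \<xi>'"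
  by (induction k) auto

lemma measurable_sample_iter:
  assumes T: "(\<lambda>(z, s). T z s) \<in> measurable (S \<Otimes>\<^sub>M P) S" and z0: "z0 \<in> space S"
  shows "sample_iter T z0 k \<in> measurable (PiM {..k} (\<lambda>_. P)) S"
proof (induction k)
  case 0
  show ?case
    using z0 by simp
next
  case (Suc k)
  have "(\<lambda>\<xi>. restrict \<xi> {..k}) \<in> measurable (PiM {..Suc k} (\<lambda>_. P)) (PiM {..k} (\<lambda>_. P))"
    by (rule measurable_restrict_subset) auto
  then have "(\<lambda>\<xi>. sample_iter T z0 k (restrict \<xi> {..k})) \<in> measurable (PiM {..Suc k} (\<lambda>_. P)) S"
    using measurable_compose Suc.IH by blast
  moreover have "(\<lambda>\<xi>. \<xi> (Suc k)) \<in> measurable (PiM {..Suc k} (\<lambda>_. P)) P"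
    by (rule measurable_component_singleton) simp
  ultimately have "(\<lambda>\<xi>. (sample_iter T z0 k (restrict \<xi> {..k}), \<xi> (Suc k))) \<in> measurable (PiM {..Suc k} (\<lambda>_. P)) (S \<Otimes>\<^sub>M P)"
    by (rule measurable_Pair)
  from measurable_compose[OF this T]
  have "(\<lambda>\<xi>. T (sample_iter T z0 k (restrict \<xi> {..k})) (\<xi> (Suc k))) \<in> measurable (PiM {..Suc k} (\<lambda>_. P)) S"
    by simp
  moreover have "sample_iter T z0 k (restrict \<xi> {..k}) = sample_iter T z0 k \<xi>" for \<xi>
    by (rule sample_iter_cong) simp
  ultimately show ?case
    by simp
qed

locale sample_chain = prob_space M for M :: "'w measure" +
  fixes P :: "'s measure" and \<xi> :: "nat \<Rightarrow> 'w \<Rightarrow> 's"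
    and S :: "'z measure" and T :: "'z \<Rightarrow> 's \<Rightarrow> 'z" and z0 :: 'z
  assumes indep: "indep_vars (\<lambda>_. P) \<xi> UNIV" and distr_sample: "\<And>k. distr M P (\<xi> k) = P"
    and T_meas: "(\<lambda>(z, s). T z s) \<in> measurable (S \<Otimes>\<^sub>M P) S" and z0_space: "z0 \<in> space S"
begin

abbreviation chain :: "nat \<Rightarrow> 'w \<Rightarrow> 'z" where
  "chain k w \<equiv> sample_iter T z0 k (\<lambda>i. \<xi> i w)"

lemma measurable_sample: "\<xi> k \<in> measurable M P"
  using indep by (simp add: indep_vars_def)

lemma prob_space_P: "prob_space P"
  using prob_space_distr[OF measurable_sample[of 0]] by (simp add: distr_sample)

lemma measurable_chain: "chain k \<in> measurable M S"
proof -
  have "(\<lambda>w. restrict (\<lambda>i. \<xi> i w) {..k}) \<in> measurable M (PiM {..k} (\<lambda>_. P))"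
    using measurable_sample by (intro measurable_restrict) auto
  from measurable_compose[OF this measurable_sample_iter[OF T_meas z0_space]]
  have "(\<lambda>w. sample_iter T z0 k (restrict (\<lambda>i. \<xi> i w) {..k})) \<in> measurable M S"
    by (simp add: comp_def)
  moreover have "sample_iter T z0 k (restrict (\<lambda>i. \<xi> i w) {..k}) = chain k w" for w
    by (rule sample_iter_cong) simp
  ultimately show ?thesis
    by simp
qed

lemma nn_integral_chain_Suc:
  assumes \<phi>: "\<phi> \<in> borel_measurable (S \<Otimes>\<^sub>M P)"
  shows "(\<integral>\<^sup>+ w. \<phi> (chain k w, \<xi> (Suc k) w) \<partial>M) = (\<integral>\<^sup>+ w. (\<integral>\<^sup>+ s. \<phi> (chain k w, s) \<partial>P) \<partial>M)"
proof -
  let ?past = "\<lambda>w. restrict (\<lambda>i. \<xi> i w) {..k}" and ?next = "\<lambda>w. restrict (\<lambda>i. \<xi> i w) {Suc k}"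
  let ?Past = "PiM {..k} (\<lambda>_. P)" and ?Next = "PiM {Suc k} (\<lambda>_. P)"
  define \<psi> where "\<psi> = (\<lambda>(f, g). \<phi> (sample_iter T z0 k f, g (Suc k)))"
  have indep_past: "indep_var ?Past ?past ?Next ?next"
    by (rule indep_var_restrict[OF indep]) auto
  have "(\<lambda>p. (sample_iter T z0 k (fst p), snd p (Suc k))) \<in> measurable (?Past \<Otimes>\<^sub>M ?Next) (S \<Otimes>\<^sub>M P)"
    by (intro measurable_Pair measurable_compose[OF measurable_fst measurable_sample_iter[OF T_meas z0_space]]
        measurable_compose[OF measurable_snd measurable_component_singleton]) auto
  from measurable_compose[OF this \<phi>]
  have \<psi>_meas: "\<psi> \<in> borel_measurable (?Past \<Otimes>\<^sub>M ?Next)"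
    by (simp add: \<psi>_def case_prod_beta')
  have past: "sample_iter T z0 k (?past w) = chain k w" for w
    by (rule sample_iter_cong) simp
  have "(\<integral>\<^sup>+ w. \<phi> (chain k w, \<xi> (Suc k) w) \<partial>M) = (\<integral>\<^sup>+ w. \<psi> (?past w, ?next w) \<partial>M)"
    by (simp add: \<psi>_def past)
  also have "\<dots> = (\<integral>\<^sup>+ w. (\<integral>\<^sup>+ t. \<psi> (?past w, t) \<partial>distr M ?Next ?next) \<partial>M)"
    by (rule indep_var_nn_integral[OF indep_past \<psi>_meas])
  also have "\<dots> = (\<integral>\<^sup>+ w. (\<integral>\<^sup>+ s. \<phi> (chain k w, s) \<partial>P) \<partial>M)"
  proof (rule nn_integral_cong)
    fix w
    assume "w \<in> space M"
    from measurable_compose[OF measurable_Pair1'[OF measurable_space[OF measurable_chain this]] \<phi>]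
    have "(\<lambda>s. \<phi> (chain k w, s)) \<in> borel_measurable P"
      by (simp add: comp_def)
    from nn_integral_distr_restrict_singleton[OF measurable_sample this]
    show "(\<integral>\<^sup>+ t. \<psi> (?past w, t) \<partial>distr M ?Next ?next) = (\<integral>\<^sup>+ s. \<phi> (chain k w, s) \<partial>P)"
      by (simp add: \<psi>_def past distr_sample)
  qed
  finally show ?thesis .
qed

lemma nn_integral_chain_step_le:
  assumes V: "V \<in> borel_measurable S" and e: "e \<in> borel_measurable S"
    and step: "\<And>z. z \<in> space S \<Longrightarrow> (\<integral>\<^sup>+ s. V (T z s) \<partial>P) + e z \<le> V z + c"
  shows "(\<integral>\<^sup>+ w. V (chain (Suc k) w) \<partial>M) + (\<integral>\<^sup>+ w. e (chain k w) \<partial>M) \<le> (\<integral>\<^sup>+ w. V (chain k w) \<partial>M) + c"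
proof -
  interpret P: prob_space P
    by (rule prob_space_P)
  have VT: "(\<lambda>(z, s). V (T z s)) \<in> borel_measurable (S \<Otimes>\<^sub>M P)"
    using measurable_compose[OF T_meas V] by (simp add: case_prod_beta')
  have "(\<integral>\<^sup>+ w. V (chain (Suc k) w) \<partial>M) = (\<integral>\<^sup>+ w. (\<integral>\<^sup>+ s. V (T (chain k w) s) \<partial>P) \<partial>M)"
    using nn_integral_chain_Suc[OF VT] by simp
  also have "\<dots> + (\<integral>\<^sup>+ w. e (chain k w) \<partial>M) = (\<integral>\<^sup>+ w. (\<integral>\<^sup>+ s. V (T (chain k w) s) \<partial>P) + e (chain k w) \<partial>M)"
    using measurable_compose[OF measurable_chain P.borel_measurable_nn_integral[OF VT]]
      measurable_compose[OF measurable_chain e]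
    by (intro nn_integral_add[symmetric]) auto
  also have "\<dots> \<le> (\<integral>\<^sup>+ w. V (chain k w) + c \<partial>M)"
    using measurable_chain by (intro nn_integral_mono step) (auto simp: measurable_def)
  also have "\<dots> = (\<integral>\<^sup>+ w. V (chain k w) \<partial>M) + c"
    using measurable_compose[OF measurable_chain V] by (simp add: nn_integral_add emeasure_space_1)
  finally show ?thesis .
qed

lemma nn_integral_chain_telescope:
  assumes V: "V \<in> borel_measurable S" and e: "e \<in> borel_measurable S"
    and step: "\<And>z. z \<in> space S \<Longrightarrow> (\<integral>\<^sup>+ s. V (T z s) \<partial>P) + e z \<le> V z + c"
  shows "(\<integral>\<^sup>+ w. V (chain n w) \<partial>M) + (\<Sum>k<n. \<integral>\<^sup>+ w. e (chain k w) \<partial>M) \<le> V z0 + of_nat n * c"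
proof (induction n)
  case 0
  show ?case
    by (simp add: emeasure_space_1)
next
  case (Suc n)
  have "(\<integral>\<^sup>+ w. V (chain (Suc n) w) \<partial>M) + (\<Sum>k<Suc n. \<integral>\<^sup>+ w. e (chain k w) \<partial>M)
      = ((\<integral>\<^sup>+ w. V (chain (Suc n) w) \<partial>M) + (\<integral>\<^sup>+ w. e (chain n w) \<partial>M)) + (\<Sum>k<n. \<integral>\<^sup>+ w. e (chain k w) \<partial>M)"
    by (simp add: add_ac)
  also have "\<dots> \<le> ((\<integral>\<^sup>+ w. V (chain n w) \<partial>M) + (\<Sum>k<n. \<integral>\<^sup>+ w. e (chain k w) \<partial>M)) + c"
    using nn_integral_chain_step_le[OF assms, of n] by (simp add: add_right_mono add_ac)
  also have "\<dots> \<le> V z0 + of_nat (Suc n) * c"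
    using Suc.IH by (simp add: add_right_mono distrib_right add_ac)
  finally show ?case .
qed

end

section \<open>The SAPS iteration\<close>

lemma avg_iter_const:
  assumes "\<gamma> \<noteq> 0"
  shows "avg_iter (\<lambda>_. \<gamma>) N z = (\<Sum>k<N. (1 / real N) *\<^sub>R z (Suc k))"
  using assms by (simp add: avg_iter_def sum.atLeast1_atMost_eq)

definition saps_step :: "real \<Rightarrow> ('a::real_normed_vector \<Rightarrow> ereal) \<Rightarrow> ('b::real_normed_vector \<Rightarrow> ereal)
    \<Rightarrow> ('a \<Rightarrow> 'b \<Rightarrow> 'c \<Rightarrow> 'a) \<Rightarrow> ('a \<Rightarrow> 'b \<Rightarrow> 'c \<Rightarrow> 'b) \<Rightarrow> 'a \<times> 'b \<Rightarrow> 'c \<Rightarrow> 'a \<times> 'b" where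
  "saps_step \<gamma> vth \<omega> Gx Gy z s =
     (Prox \<gamma> vth (fst z - \<gamma> *\<^sub>R Gx (fst z) (snd z) s), Prox \<gamma> \<omega> (snd z + \<gamma> *\<^sub>R Gy (fst z) (snd z) s))"

locale saps_problem =
  fixes vth :: "'a::euclidean_space \<Rightarrow> ereal" and \<omega> :: "'b::euclidean_space \<Rightarrow> ereal"
    and f :: "'a \<Rightarrow> 'b \<Rightarrow> real" and P :: "'c measure"
    and Gx :: "'a \<Rightarrow> 'b \<Rightarrow> 'c \<Rightarrow> 'a" and Gy :: "'a \<Rightarrow> 'b \<Rightarrow> 'c \<Rightarrow> 'b"
    and xs :: 'a and ys :: 'b and Ms :: real and \<gamma> :: real
  assumes vth_plc: "proper_lsc_convex vth" and \<omega>_plc: "proper_lsc_convex \<omega>"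
    and f_cont: "continuous_on (edom vth \<times> edom \<omega>) (\<lambda>(u, v). f u v)"
    and f_convex: "\<forall>v\<in>edom \<omega>. convex_on (edom vth) (\<lambda>u. f u v)"
    and f_concave: "\<forall>u\<in>edom vth. concave_on (edom \<omega>) (\<lambda>v. f u v)"
    and P_prob: "prob_space P"
    and Gx_meas: "(\<lambda>(u, v, s). Gx u v s) \<in> borel_measurable (borel \<Otimes>\<^sub>M borel \<Otimes>\<^sub>M P)"
    and Gy_meas: "(\<lambda>(u, v, s). Gy u v s) \<in> borel_measurable (borel \<Otimes>\<^sub>M borel \<Otimes>\<^sub>M P)"
    and Gx_int: "\<forall>u\<in>edom vth. \<forall>v\<in>edom \<omega>. integrable P (Gx u v)"
    and Gy_int: "\<forall>u\<in>edom vth. \<forall>v\<in>edom \<omega>. integrable P (Gy u v)"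
    and gx_sub: "\<forall>u\<in>edom vth. \<forall>v\<in>edom \<omega>. \<forall>u'\<in>edom vth.
                   f u' v \<ge> f u v + (\<integral>s. Gx u v s \<partial>P) \<bullet> (u' - u)"
    and gy_sub: "\<forall>u\<in>edom vth. \<forall>v\<in>edom \<omega>. \<forall>v'\<in>edom \<omega>.
                   - f u v' \<ge> - f u v + (- (\<integral>s. Gy u v s \<partial>P)) \<bullet> (v' - v)"
    and saddle_feasible: "(xs, ys) \<in> edom vth \<times> edom \<omega>"
    and saddle: "\<forall>(u, v)\<in>edom vth \<times> edom \<omega>.
                   phi vth f \<omega> xs v \<le> phi vth f \<omega> xs ys \<and> phi vth f \<omega> xs ys \<le> phi vth f \<omega> u ys"
    and second_moment_bound: "\<forall>(u, v)\<in>edom vth \<times> edom \<omega>. \<exists>vx\<in>esubdiff vth u. \<exists>vy\<in>esubdiff \<omega> v.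
               integrable P (\<lambda>s. (norm (vx + Gx u v s, vy - Gy u v s))^2) \<and>
               (\<integral>s. (norm (vx + Gx u v s, vy - Gy u v s))^2 \<partial>P) \<le> Ms^2"
    and \<gamma>_pos: "\<gamma> > 0"
begin

abbreviation "feasible \<equiv> edom vth \<times> edom \<omega>"
abbreviation "step \<equiv> saps_step \<gamma> vth \<omega> Gx Gy"
abbreviation "gap \<equiv> eps_phi vth f \<omega> (xs, ys)"
abbreviation hsum :: "'a \<times> 'b \<Rightarrow> real" where
  "hsum z \<equiv> real_of_ereal (vth (fst z)) + real_of_ereal (\<omega> (snd z))"

lemma xs_dom: "xs \<in> edom vth" and ys_dom: "ys \<in> edom \<omega>"
  using saddle_feasible by simp_all

lemma second_moment:
  assumes "u \<in> edom vth" "v \<in> edom \<omega>"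
  obtains vx vy where "vx \<in> esubdiff vth u" "vy \<in> esubdiff \<omega> v"
    "integrable P (\<lambda>s. (norm (vx + Gx u v s, vy - Gy u v s))^2)"
    "(\<integral>s. (norm (vx + Gx u v s, vy - Gy u v s))^2 \<partial>P) \<le> Ms^2"
  using second_moment_bound assms by blast

lemma saddle_subgradients:
  obtains vx0 vy0 where "vx0 \<in> esubdiff vth xs" "vy0 \<in> esubdiff \<omega> ys"
  by (rule second_moment[OF xs_dom ys_dom])

lemma step_feasible: "step z s \<in> feasible"
proof -
  obtain vx0 vy0 where "vx0 \<in> esubdiff vth xs" "vy0 \<in> esubdiff \<omega> ys"
    by (rule saddle_subgradients)
  then show ?thesis
    using Prox_in_edom[OF vth_plc \<gamma>_pos] Prox_in_edom[OF \<omega>_plc \<gamma>_pos] by (simp add: saps_step_def)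
qed

lemma gap_nonneg:
  assumes "z \<in> feasible"
  shows "0 \<le> gap z"
proof -
  have "phi vth f \<omega> xs (snd z) \<le> phi vth f \<omega> xs ys" "phi vth f \<omega> xs ys \<le> phi vth f \<omega> (fst z) ys"
    using saddle assms by auto
  then show ?thesis
    by (simp add: eps_phi_def)
qed

lemma gap_le_linearisation:
  assumes "u \<in> edom vth" "v \<in> edom \<omega>"
  shows "gap (u, v) \<le> hsum (u, v) - hsum (xs, ys)
           + (\<integral>s. Gx u v s \<partial>P) \<bullet> (u - xs) - (\<integral>s. Gy u v s \<partial>P) \<bullet> (v - ys)"
proof -
  have "f u v + (\<integral>s. Gx u v s \<partial>P) \<bullet> (xs - u) \<le> f xs v"
    using gx_sub assms xs_dom by blast
  moreover have "- f u v + (- (\<integral>s. Gy u v s \<partial>P)) \<bullet> (ys - v) \<le> - f u ys"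
    using gy_sub assms ys_dom by blast
  ultimately show ?thesis
    by (simp add: eps_phi_def phi_def inner_diff_right)
qed

lemma convex_on_gap: "convex_on feasible gap"
proof -
  have "convex feasible"
    using vth_plc \<omega>_plc by (intro convex_Times) (auto simp: proper_lsc_convex_def convex_efun_def)
  have "convex_on feasible (\<lambda>z. (real_of_ereal (vth (fst z)) + f (fst z) ys)
                               + (real_of_ereal (\<omega> (snd z)) - f xs (snd z)))"
    using vth_plc \<omega>_plc bspec[OF f_convex ys_dom] bspec[OF f_concave xs_dom]
    by (intro convex_on_Times_add convex_on_add convex_on_diff) (auto simp: proper_lsc_convex_def convex_efun_def)
  then have "convex_on feasible (\<lambda>z. (real_of_ereal (vth (fst z)) + f (fst z) ys)
               + (real_of_ereal (\<omega> (snd z)) - f xs (snd z)) - (real_of_ereal (\<omega> ys) + real_of_ereal (vth xs)))"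
    by (rule convex_on_diff) (simp add: concave_on_const \<open>convex feasible\<close>)
  moreover have "gap = (\<lambda>z. (real_of_ereal (vth (fst z)) + f (fst z) ys)
               + (real_of_ereal (\<omega> (snd z)) - f xs (snd z)) - (real_of_ereal (\<omega> ys) + real_of_ereal (vth xs)))"
    by (simp add: fun_eq_iff eps_phi_def phi_def)
  ultimately show ?thesis
    by simp
qed

lemma measurable_step:
  "(\<lambda>(z, s). step z s) \<in> measurable (restrict_space borel feasible \<Otimes>\<^sub>M P) (restrict_space borel feasible)"
proof (rule measurable_restrict_space2)
  show "(\<lambda>(z, s). step z s) \<in> space (restrict_space borel feasible \<Otimes>\<^sub>M P) \<rightarrow> feasible"
    using step_feasible by auto
  let ?B = "restrict_space borel feasible \<Otimes>\<^sub>M P"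
  obtain vx0 vy0 where sub: "vx0 \<in> esubdiff vth xs" "vy0 \<in> esubdiff \<omega> ys"
    by (rule saddle_subgradients)
  have "(\<lambda>z. fst z) \<in> borel_measurable (restrict_space borel feasible)"
    and "(\<lambda>z. snd z) \<in> borel_measurable (restrict_space borel feasible)"
    by (intro measurable_restrict_space1 borel_measurable_continuous_onI continuous_intros)+
  then have u: "(\<lambda>p. fst (fst p)) \<in> borel_measurable ?B" and v: "(\<lambda>p. snd (fst p)) \<in> borel_measurable ?B"
    by (auto intro: measurable_compose[OF measurable_fst])
  have "(\<lambda>p. (fst (fst p), snd (fst p), snd p)) \<in> measurable ?B (borel \<Otimes>\<^sub>M borel \<Otimes>\<^sub>M P)"
    by (intro measurable_Pair u v measurable_snd)
  from measurable_compose[OF this Gx_meas] measurable_compose[OF this Gy_meas]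
  have gx: "(\<lambda>p. Gx (fst (fst p)) (snd (fst p)) (snd p)) \<in> borel_measurable ?B"
    and gy: "(\<lambda>p. Gy (fst (fst p)) (snd (fst p)) (snd p)) \<in> borel_measurable ?B"
    by simp_all
  have "(\<lambda>p. Prox \<gamma> vth (fst (fst p) - \<gamma> *\<^sub>R Gx (fst (fst p)) (snd (fst p)) (snd p))) \<in> borel_measurable ?B"
    using u gx by (intro measurable_compose[OF _ borel_measurable_Prox[OF vth_plc \<gamma>_pos sub(1)]]) simp
  moreover have "(\<lambda>p. Prox \<gamma> \<omega> (snd (fst p) + \<gamma> *\<^sub>R Gy (fst (fst p)) (snd (fst p)) (snd p))) \<in> borel_measurable ?B"
    using v gy by (intro measurable_compose[OF _ borel_measurable_Prox[OF \<omega>_plc \<gamma>_pos sub(2)]]) simp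
  ultimately have "(\<lambda>p. step (fst p) (snd p)) \<in> measurable ?B (borel \<Otimes>\<^sub>M borel)"
    unfolding saps_step_def by (rule measurable_Pair)
  then show "(\<lambda>(z, s). step z s) \<in> borel_measurable ?B"
    by (simp add: borel_prod case_prod_beta')
qed

lemma measurable_gap: "gap \<in> borel_measurable (restrict_space borel feasible)"
proof -
  have "continuous_on feasible ((\<lambda>(u, v). f u v) \<circ> (\<lambda>z. (fst z, ys)))"
    using ys_dom by (intro continuous_on_compose continuous_on_subset[OF f_cont]) (auto intro!: continuous_intros)
  moreover have "continuous_on feasible ((\<lambda>(u, v). f u v) \<circ> (\<lambda>z. (xs, snd z)))"
    using xs_dom by (intro continuous_on_compose continuous_on_subset[OF f_cont]) (auto intro!: continuous_intros)
  ultimately have f_part: "(\<lambda>z. f (fst z) ys - f xs (snd z)) \<in> borel_measurable (restrict_space borel feasible)"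
    by (intro borel_measurable_continuous_on_restrict continuous_on_diff) (simp_all add: comp_def)
  have vth_meas: "vth \<in> borel_measurable borel" and \<omega>_meas: "\<omega> \<in> borel_measurable borel"
    using vth_plc \<omega>_plc by (auto simp: proper_lsc_convex_def intro: borel_measurable_lsc_fun)
  have fst_meas: "fst \<in> borel_measurable (borel :: ('a \<times> 'b) measure)"
    and snd_meas: "snd \<in> borel_measurable (borel :: ('a \<times> 'b) measure)"
    by (intro borel_measurable_continuous_onI continuous_intros)+
  have "(\<lambda>z::'a \<times> 'b. vth (fst z)) \<in> borel_measurable borel" "(\<lambda>z::'a \<times> 'b. \<omega> (snd z)) \<in> borel_measurable borel"
    using measurable_compose[OF fst_meas vth_meas] measurable_compose[OF snd_meas \<omega>_meas] .
  then have "(\<lambda>z. real_of_ereal (vth (fst z)) + real_of_ereal (\<omega> (snd z))) \<in> borel_measurable (restrict_space borel feasible)"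
    by (intro measurable_restrict_space1 borel_measurable_add borel_measurable_real_of_ereal)
  with f_part have "(\<lambda>z. (real_of_ereal (vth (fst z)) + real_of_ereal (\<omega> (snd z))) + (f (fst z) ys - f xs (snd z))
                          - (real_of_ereal (\<omega> ys) + real_of_ereal (vth xs))) \<in> borel_measurable (restrict_space borel feasible)"
    by measurable
  moreover have "gap = (\<lambda>z. (real_of_ereal (vth (fst z)) + real_of_ereal (\<omega> (snd z))) + (f (fst z) ys - f xs (snd z))
                          - (real_of_ereal (\<omega> ys) + real_of_ereal (vth xs)))"
    by (simp add: fun_eq_iff eps_phi_def phi_def)
  ultimately show ?thesis
    by simp
qed

lemma step_sq_dist_le:
  assumes u: "u \<in> edom vth" and v: "v \<in> edom \<omega>" and vx: "vx \<in> esubdiff vth u" and vy: "vy \<in> esubdiff \<omega> v"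
  shows "(norm (step (u, v) s - (xs, ys)))^2 \<le> (norm ((u, v) - (xs, ys)))^2
           - 2 * \<gamma> * (hsum (u, v) - hsum (xs, ys) + Gx u v s \<bullet> (u - xs) - Gy u v s \<bullet> (v - ys))
           + \<gamma>^2 * (norm (vx + Gx u v s, vy - Gy u v s))^2"
proof -
  obtain vx0 vy0 where sub0: "vx0 \<in> esubdiff vth xs" "vy0 \<in> esubdiff \<omega> ys"
    by (rule saddle_subgradients)
  define G where "G = (Gx u v s, - Gy u v s)"
  define p where "p = step (u, v) s"
  have p: "fst p \<in> edom vth" "snd p \<in> edom \<omega>"
    using step_feasible[of "(u, v)" s] by (auto simp: p_def)
  have "\<gamma> * hsum p + inner ((u, v) - \<gamma> *\<^sub>R G - p) ((xs, ys) - p) \<le> \<gamma> * hsum (xs, ys)"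
    using Prox_variational_ineq[OF vth_plc \<gamma>_pos sub0(1) xs_dom, of "u - \<gamma> *\<^sub>R Gx u v s"]
      Prox_variational_ineq[OF \<omega>_plc \<gamma>_pos sub0(2) ys_dom, of "v + \<gamma> *\<^sub>R Gy u v s"]
    by (simp add: p_def G_def saps_step_def algebra_simps)
  moreover have "hsum (u, v) + inner (vx, vy) (p - (u, v)) \<le> hsum p"
    using esubdiff_real_ineq[OF vth_plc vx p(1)] esubdiff_real_ineq[OF \<omega>_plc vy p(2)]
    by (cases p) simp
  ultimately have "(norm (p - (xs, ys)))^2 \<le> (norm ((u, v) - (xs, ys)))^2
      - 2 * \<gamma> * (hsum (u, v) - hsum (xs, ys) + inner G ((u, v) - (xs, ys))) + \<gamma>^2 * (norm ((vx, vy) + G))^2"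
    by (rule prox_grad_step_sq_dist_le[OF \<gamma>_pos])
  then show ?thesis
    by (simp add: p_def G_def inner_diff_right algebra_simps)
qed

lemma expected_step_le:
  assumes "z \<in> feasible"
  shows "(\<integral>\<^sup>+ s. ennreal ((norm (step z s - (xs, ys)))^2) \<partial>P) + ennreal (2 * \<gamma> * gap z)
           \<le> ennreal ((norm (z - (xs, ys)))^2 + \<gamma>^2 * Ms^2)"
proof -
  interpret P: prob_space P
    by (rule P_prob)
  obtain u v where z: "z = (u, v)" and u: "u \<in> edom vth" and v: "v \<in> edom \<omega>"
    using assms by auto
  obtain vx vy where vx: "vx \<in> esubdiff vth u" and vy: "vy \<in> esubdiff \<omega> v"
    and Q_int: "integrable P (\<lambda>s. (norm (vx + Gx u v s, vy - Gy u v s))^2)"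
    and Q_le: "(\<integral>s. (norm (vx + Gx u v s, vy - Gy u v s))^2 \<partial>P) \<le> Ms^2"
    by (rule second_moment[OF u v])
  define K where "K = (norm (z - (xs, ys)))^2 - 2 * \<gamma> * (hsum z - hsum (xs, ys))"
  define R where "R s = K - 2 * \<gamma> * (Gx u v s \<bullet> (u - xs)) + 2 * \<gamma> * (Gy u v s \<bullet> (v - ys))
                         + \<gamma>^2 * (norm (vx + Gx u v s, vy - Gy u v s))^2" for s
  have step_le_R: "(norm (step z s - (xs, ys)))^2 \<le> R s" for s
    using step_sq_dist_le[OF u v vx vy, of s] by (simp add: z R_def K_def algebra_simps)
  have G_int: "integrable P (Gx u v)" "integrable P (Gy u v)"
    using Gx_int Gy_int u v by simp_all
  have R_int: "integrable P R"
    unfolding R_def using G_int Q_int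
    by (intro Bochner_Integration.integrable_add Bochner_Integration.integrable_diff integrable_mult_right
        integrable_inner_left) auto
  have "(\<integral>s. R s \<partial>P) = K - 2 * \<gamma> * ((\<integral>s. Gx u v s \<partial>P) \<bullet> (u - xs)) + 2 * \<gamma> * ((\<integral>s. Gy u v s \<partial>P) \<bullet> (v - ys))
         + \<gamma>^2 * (\<integral>s. (norm (vx + Gx u v s, vy - Gy u v s))^2 \<partial>P)"
    unfolding R_def using G_int Q_int
    by (simp add: Bochner_Integration.integral_add Bochner_Integration.integral_diff P.prob_space)
  also have "\<dots> \<le> (norm (z - (xs, ys)))^2 + \<gamma>^2 * Ms^2 - 2 * \<gamma> * gap z"
  proof -
    have "2 * \<gamma> * gap z \<le> 2 * \<gamma> * (hsum z - hsum (xs, ys)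
        + (\<integral>s. Gx u v s \<partial>P) \<bullet> (u - xs) - (\<integral>s. Gy u v s \<partial>P) \<bullet> (v - ys))"
      using gap_le_linearisation[OF u v] \<gamma>_pos by (simp add: z)
    then have "2 * \<gamma> * gap z \<le> 2 * \<gamma> * (hsum z - hsum (xs, ys))
        + 2 * \<gamma> * ((\<integral>s. Gx u v s \<partial>P) \<bullet> (u - xs)) - 2 * \<gamma> * ((\<integral>s. Gy u v s \<partial>P) \<bullet> (v - ys))"
      by (simp add: algebra_simps)
    moreover have "\<gamma>^2 * (\<integral>s. (norm (vx + Gx u v s, vy - Gy u v s))^2 \<partial>P) \<le> \<gamma>^2 * Ms^2"
      using Q_le by (simp add: mult_left_mono)
    ultimately show ?thesis
      unfolding K_def by linarith
  qed
  finally have "(\<integral>s. R s \<partial>P) + 2 * \<gamma> * gap z \<le> (norm (z - (xs, ys)))^2 + \<gamma>^2 * Ms^2"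
    by simp
  then show ?thesis
    using gap_nonneg[OF assms] \<gamma>_pos by (intro nn_integral_add_le_of_integral_add_le[OF R_int _ step_le_R]) auto
qed

lemma measurable_scaled_gap:
  "(\<lambda>z. ennreal (2 * \<gamma> * gap z)) \<in> borel_measurable (restrict_space borel feasible)"
  using measurable_gap by (intro measurable_compose[OF _ measurable_ennreal] borel_measurable_times) auto

lemma sum_nn_integral_gap_le:
  assumes M: "prob_space M" and ind: "prob_space.indep_vars M (\<lambda>_. P) \<xi> UNIV"
    and distr: "\<And>k. distr M P (\<xi> k) = P" and z0: "z0 \<in> feasible"
  shows "(\<Sum>k<n. \<integral>\<^sup>+ w. ennreal (2 * \<gamma> * gap (sample_iter step z0 k (\<lambda>i. \<xi> i w))) \<partial>M)
           \<le> ennreal ((norm (z0 - (xs, ys)))^2 + real n * \<gamma>^2 * Ms^2)"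
proof -
  interpret C: sample_chain M P \<xi> "restrict_space borel feasible" step z0
    using M ind distr measurable_step z0 by (simp add: sample_chain_def sample_chain_axioms_def space_restrict_space)
  have V: "(\<lambda>z. ennreal ((norm (z - (xs, ys)))^2)) \<in> borel_measurable (restrict_space borel feasible)"
    by (intro measurable_restrict_space1 measurable_compose[OF _ measurable_ennreal]
        borel_measurable_continuous_onI continuous_intros)
  have "(\<integral>\<^sup>+ w. ennreal ((norm (C.chain n w - (xs, ys)))^2) \<partial>M)
      + (\<Sum>k<n. \<integral>\<^sup>+ w. ennreal (2 * \<gamma> * gap (C.chain k w)) \<partial>M)
      \<le> ennreal ((norm (z0 - (xs, ys)))^2) + of_nat n * ennreal (\<gamma>^2 * Ms^2)"
    using expected_step_le
    by (intro C.nn_integral_chain_telescope[OF V measurable_scaled_gap]) (simp add: space_restrict_space)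
  also have "\<dots> = ennreal ((norm (z0 - (xs, ys)))^2 + real n * \<gamma>^2 * Ms^2)"
    by (simp add: ennreal_plus ennreal_mult ennreal_of_nat_eq_real_of_nat mult.assoc)
  finally show ?thesis
    by (rule order_trans[rotated]) simp
qed

lemma gap_average_le:
  assumes N: "N > 0" and y: "\<And>k. k < N \<Longrightarrow> y k \<in> feasible"
  shows "ennreal (gap (\<Sum>k<N. (1 / real N) *\<^sub>R y k))
           \<le> (\<Sum>k<N. ennreal (2 * \<gamma> * gap (y k))) * ennreal (1 / (2 * \<gamma> * real N))"
proof -
  have nonneg: "0 \<le> 2 * \<gamma> * gap (y k)" if "k < N" for k
    using \<gamma>_pos gap_nonneg[OF y[OF that]] by simp
  have "gap (\<Sum>k<N. (1 / real N) *\<^sub>R y k) \<le> (\<Sum>k<N. (1 / real N) * gap (y k))"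
    by (rule convex_on_sum[OF _ _ convex_on_gap]) (use N y in auto)
  also have "\<dots> = (\<Sum>k<N. 2 * \<gamma> * gap (y k)) * (1 / (2 * \<gamma> * real N))"
    using \<gamma>_pos by (simp add: sum_distrib_right sum_divide_distrib)
  finally have "ennreal (gap (\<Sum>k<N. (1 / real N) *\<^sub>R y k))
      \<le> ennreal ((\<Sum>k<N. 2 * \<gamma> * gap (y k)) * (1 / (2 * \<gamma> * real N)))"
    by (rule ennreal_leI)
  also have "\<dots> = ennreal (\<Sum>k<N. 2 * \<gamma> * gap (y k)) * ennreal (1 / (2 * \<gamma> * real N))"
    using nonneg \<gamma>_pos by (intro ennreal_mult sum_nonneg) auto
  also have "\<dots> = (\<Sum>k<N. ennreal (2 * \<gamma> * gap (y k))) * ennreal (1 / (2 * \<gamma> * real N))"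
    using nonneg by (subst sum_ennreal) auto
  finally show ?thesis .
qed

lemma nn_integral_gap_avg_le:
  fixes z :: "nat \<Rightarrow> 'w \<Rightarrow> 'a \<times> 'b"
  assumes M: "prob_space M" and ind: "prob_space.indep_vars M (\<lambda>_. P) \<xi> UNIV"
    and distr: "\<And>k. distr M P (\<xi> k) = P" and N: "N > 0" and z1: "z1 \<in> feasible"
    and init: "\<And>w. w \<in> space M \<Longrightarrow> z 1 w = z1"
    and iter: "\<And>k w. k \<in> {1..N} \<Longrightarrow> w \<in> space M \<Longrightarrow> z (Suc k) w = step (z k w) (\<xi> k w)"
  shows "(\<integral>\<^sup>+ w. ennreal (gap (avg_iter (\<lambda>_. \<gamma>) N (\<lambda>j. z j w))) \<partial>M)
           \<le> ennreal (((norm (z1 - (xs, ys)))^2 + real N * \<gamma>^2 * Ms^2) / (2 * \<gamma> * real N))"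
proof -
  interpret C: sample_chain M P \<xi> "restrict_space borel feasible" step z1
    using M ind distr measurable_step z1 by (simp add: sample_chain_def sample_chain_axioms_def space_restrict_space)
  define c where "c = ennreal (1 / (2 * \<gamma> * real N))"
  have chain_feasible: "C.chain k w \<in> feasible" for k w
    by (cases k) (simp_all add: z1 step_feasible)
  (* C.chain k is the iterate z (Suc k); the given iterates need not be measurable, but on space M
     they agree with the measurable chain. *)
  have avg: "avg_iter (\<lambda>_. \<gamma>) N (\<lambda>j. z j w) = (\<Sum>k<N. (1 / real N) *\<^sub>R C.chain k w)"
    if w: "w \<in> space M" for w
  proof -
    have "k \<le> N \<Longrightarrow> z (Suc k) w = C.chain k w" for k
      by (induction k) (use init[OF w] iter[OF _ w] in auto)
    then show ?thesis
      using \<gamma>_pos by (simp add: avg_iter_const)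
  qed
  have "(\<integral>\<^sup>+ w. ennreal (gap (avg_iter (\<lambda>_. \<gamma>) N (\<lambda>j. z j w))) \<partial>M)
      \<le> (\<integral>\<^sup>+ w. (\<Sum>k<N. ennreal (2 * \<gamma> * gap (C.chain k w))) * c \<partial>M)"
  proof (rule nn_integral_mono)
    fix w
    assume w: "w \<in> space M"
    show "ennreal (gap (avg_iter (\<lambda>_. \<gamma>) N (\<lambda>j. z j w))) \<le> (\<Sum>k<N. ennreal (2 * \<gamma> * gap (C.chain k w))) * c"
      unfolding avg[OF w] c_def by (rule gap_average_le[OF N]) (rule chain_feasible)
  qed
  also have "\<dots> = (\<Sum>k<N. \<integral>\<^sup>+ w. ennreal (2 * \<gamma> * gap (C.chain k w)) \<partial>M) * c"
    using measurable_compose[OF C.measurable_chain measurable_scaled_gap]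
    by (simp add: nn_integral_multc nn_integral_sum)
  also have "\<dots> \<le> ennreal ((norm (z1 - (xs, ys)))^2 + real N * \<gamma>^2 * Ms^2) * c"
    by (intro mult_right_mono sum_nn_integral_gap_le[OF M ind distr z1]) simp
  also have "\<dots> = ennreal (((norm (z1 - (xs, ys)))^2 + real N * \<gamma>^2 * Ms^2) / (2 * \<gamma> * real N))"
    unfolding c_def using \<gamma>_pos by (subst ennreal_mult[symmetric]) simp_all
  finally show ?thesis .
qed

end

section \<open>Step sizes\<close>

lemma step_size_rate_inv_sqrt:
  assumes "N > 0"
  shows "(D^2 + real N * (1 / sqrt N)^2 * Ms^2) / (2 * (1 / sqrt N) * real N) = (D^2 + Ms^2) / (2 * sqrt N)"
proof -
  define s where "s = sqrt (real N)"
  have "s > 0" "real N = s^2"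
    using assms by (simp_all add: s_def)
  then show ?thesis
    unfolding s_def[symmetric] by (simp add: field_simps power2_eq_square)
qed

lemma step_size_rate_theta_le:
  assumes "N > 0" "Ms > 0" "\<theta> > 0" "D \<ge> 0" and \<gamma>: "\<gamma> = \<theta> * D / (Ms * sqrt N)"
  shows "(D^2 + real N * \<gamma>^2 * Ms^2) / (2 * \<gamma> * real N) \<le> max \<theta> (1 / \<theta>) * D * Ms / sqrt N"
proof (cases "D = 0")
  case False
  define s where "s = sqrt (real N)"
  have s: "s > 0" "real N = s^2"
    using assms by (simp_all add: s_def)
  have "(D^2 + real N * \<gamma>^2 * Ms^2) / (2 * \<gamma> * real N) = (\<theta> + 1 / \<theta>) / 2 * (D * Ms / s)"
    unfolding \<gamma> s_def[symmetric] s(2) using assms(2,3) s(1) False by (simp add: field_simps power2_eq_square)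
  also have "\<dots> \<le> max \<theta> (1 / \<theta>) * (D * Ms / s)"
    using assms s(1) by (intro mult_right_mono) auto
  finally show ?thesis
    by (simp add: s_def)
qed (simp add: \<gamma>)

theorem theorem2p1:
  fixes vth :: "'a::euclidean_space \<Rightarrow> ereal"
    and \<omega> :: "'b::euclidean_space \<Rightarrow> ereal"
    and M :: "'w measure"            \<comment> \<open>underlying probability space\<close>
    and P :: "'c measure"            \<comment> \<open>distribution of xi, support Xi = space P\<close>
    and \<xi> :: "nat \<Rightarrow> 'w \<Rightarrow> 'c"       \<comment> \<open>samples xi_1, xi_2, ...\<close>
    and F :: "'a \<Rightarrow> 'b \<Rightarrow> 'c \<Rightarrow> real"
    and f :: "'a \<Rightarrow> 'b \<Rightarrow> real"
    and Gx :: "'a \<Rightarrow> 'b \<Rightarrow> 'c \<Rightarrow> 'a"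
    and Gy :: "'a \<Rightarrow> 'b \<Rightarrow> 'c \<Rightarrow> 'b"
    and xs :: 'a and ys :: 'b
    and Ms :: real
    and x :: "nat \<Rightarrow> 'w \<Rightarrow> 'a" and y :: "nat \<Rightarrow> 'w \<Rightarrow> 'b"
    and x1 :: 'a and y1 :: 'b
    and N :: nat and \<gamma> :: real
  defines "Z \<equiv> edom vth \<times> edom \<omega>"
  assumes vth_plc: "proper_lsc_convex vth" and om_plc: "proper_lsc_convex \<omega>"
    \<comment> \<open>f = E[F], finite, continuous, convex-concave on Z\<close>
    and f_def: "\<forall>u\<in>edom vth. \<forall>v\<in>edom \<omega>. integrable P (F u v) \<and> f u v = (\<integral>s. F u v s \<partial>P)"
    and f_cont: "continuous_on Z (\<lambda>(u, v). f u v)"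
    and f_convex: "\<forall>v\<in>edom \<omega>. convex_on (edom vth) (\<lambda>u. f u v)"
    and f_concave: "\<forall>u\<in>edom vth. concave_on (edom \<omega>) (\<lambda>v. f u v)"
    \<comment> \<open>(A1) i.i.d. samples with distribution P\<close>
    and M_prob: "prob_space M" and P_prob: "prob_space P"
    and xi_meas: "\<forall>k. \<xi> k \<in> measurable M P"
    and xi_distr: "\<forall>k. distr M P (\<xi> k) = P"
    and xi_indep: "prob_space.indep_vars M (\<lambda>_. P) \<xi> UNIV"
    \<comment> \<open>(A2) stochastic oracle: measurable, integrable, unbiased (partial) subgradients\<close>
    and Gx_meas: "(\<lambda>(u, v, s). Gx u v s) \<in> borel_measurable (borel \<Otimes>\<^sub>M borel \<Otimes>\<^sub>M P)"
    and Gy_meas: "(\<lambda>(u, v, s). Gy u v s) \<in> borel_measurable (borel \<Otimes>\<^sub>M borel \<Otimes>\<^sub>M P)"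
    and Gx_int: "\<forall>u\<in>edom vth. \<forall>v\<in>edom \<omega>. integrable P (Gx u v)"
    and Gy_int: "\<forall>u\<in>edom vth. \<forall>v\<in>edom \<omega>. integrable P (Gy u v)"
    and gx_sub: "\<forall>u\<in>edom vth. \<forall>v\<in>edom \<omega>. \<forall>u'\<in>edom vth.
                   f u' v \<ge> f u v + (\<integral>s. Gx u v s \<partial>P) \<bullet> (u' - u)"
    and gy_sub: "\<forall>u\<in>edom vth. \<forall>v\<in>edom \<omega>. \<forall>v'\<in>edom \<omega>.
                   - f u v' \<ge> - f u v + (- (\<integral>s. Gy u v s \<partial>P)) \<bullet> (v' - v)"
    \<comment> \<open>(A3) saddle point\<close>
    and zs_Z: "(xs, ys) \<in> Z"
    and saddle: "\<forall>(u, v)\<in>Z. phi vth f \<omega> xs v \<le> phi vth f \<omega> xs ys \<and> phi vth f \<omega> xs ys \<le> phi vth f \<omega> u ys"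
    \<comment> \<open>(A4) bounded second moment\<close>
    and Ms_pos: "Ms > 0"
    and A4: "\<forall>(u, v)\<in>Z. \<exists>vx\<in>esubdiff vth u. \<exists>vy\<in>esubdiff \<omega> v.
               integrable P (\<lambda>s. (norm (vx + Gx u v s, vy - Gy u v s))^2) \<and>
               (\<integral>s. (norm (vx + Gx u v s, vy - Gy u v s))^2 \<partial>P) \<le> Ms^2"
    \<comment> \<open>SAPS iterates with constant step size gamma\<close>
    and N_pos: "N > 0" and \<gamma>_pos: "\<gamma> > 0"
    and z1_Z: "(x1, y1) \<in> Z"
    and init: "\<forall>w\<in>space M. x 1 w = x1 \<and> y 1 w = y1"
    and step_x: "\<forall>k\<in>{1..N}. \<forall>w\<in>space M.
                   x (Suc k) w = Prox \<gamma> vth (x k w - \<gamma> *\<^sub>R Gx (x k w) (y k w) (\<xi> k w))"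
    and step_y: "\<forall>k\<in>{1..N}. \<forall>w\<in>space M.
                   y (Suc k) w = Prox \<gamma> \<omega> (y k w + \<gamma> *\<^sub>R Gy (x k w) (y k w) (\<xi> k w))"
  shows
    "(\<gamma> = 1 / sqrt N \<longrightarrow>
        (\<integral>\<^sup>+ w. ennreal (eps_phi vth f \<omega> (xs, ys) (avg_iter (\<lambda>_. \<gamma>) N (\<lambda>j. (x j w, y j w)))) \<partial>M)
          \<le> ennreal (((norm ((x1, y1) - (xs, ys)))^2 + Ms^2) / (2 * sqrt N))) \<and>
     (\<gamma> = norm ((x1, y1) - (xs, ys)) / (Ms * sqrt N) \<longrightarrow>
        (\<integral>\<^sup>+ w. ennreal (eps_phi vth f \<omega> (xs, ys) (avg_iter (\<lambda>_. \<gamma>) N (\<lambda>j. (x j w, y j w)))) \<partial>M)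
          \<le> ennreal (norm ((x1, y1) - (xs, ys)) * Ms / sqrt N)) \<and>
     (\<forall>\<theta>>0. \<gamma> = \<theta> * norm ((x1, y1) - (xs, ys)) / (Ms * sqrt N) \<longrightarrow>
        (\<integral>\<^sup>+ w. ennreal (eps_phi vth f \<omega> (xs, ys) (avg_iter (\<lambda>_. \<gamma>) N (\<lambda>j. (x j w, y j w)))) \<partial>M)
          \<le> ennreal (max \<theta> (1 / \<theta>) * norm ((x1, y1) - (xs, ys)) * Ms / sqrt N))"
proof -
  interpret saps: saps_problem vth \<omega> f P Gx Gy xs ys Ms \<gamma>
    using vth_plc om_plc f_cont f_convex f_concave P_prob Gx_meas Gy_meas Gx_int Gy_int gx_sub gy_sub
      zs_Z saddle A4 \<gamma>_pos
    unfolding Z_def by (rule saps_problem.intro)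
  let ?D = "norm ((x1, y1) - (xs, ys))"
  let ?E = "\<integral>\<^sup>+ w. ennreal (eps_phi vth f \<omega> (xs, ys) (avg_iter (\<lambda>_. \<gamma>) N (\<lambda>j. (x j w, y j w)))) \<partial>M"
  have bound: "?E \<le> ennreal ((?D^2 + real N * \<gamma>^2 * Ms^2) / (2 * \<gamma> * real N))"
    using init step_x step_y z1_Z xi_distr
    by (intro saps.nn_integral_gap_avg_le[OF M_prob xi_indep _ N_pos]) (auto simp: Z_def saps_step_def)
  have rate: "?E \<le> ennreal (max \<theta> (1 / \<theta>) * ?D * Ms / sqrt N)"
    if "\<theta> > 0" "\<gamma> = \<theta> * ?D / (Ms * sqrt N)" for \<theta>
    using step_size_rate_theta_le[OF N_pos Ms_pos that(1) _ that(2)]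
    by (intro order_trans[OF bound ennreal_leI]) simp
  show ?thesis
  proof (intro conjI impI allI)
    assume "\<gamma> = 1 / sqrt N"
    then show "?E \<le> ennreal ((?D^2 + Ms^2) / (2 * sqrt N))"
      using bound by (simp only: step_size_rate_inv_sqrt[OF N_pos])
  next
    assume "\<gamma> = ?D / (Ms * sqrt N)"
    then show "?E \<le> ennreal (?D * Ms / sqrt N)"
      using rate[of 1] by simp
  qed (rule rate)
qed

end
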